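(* Let $d_n$ denote the number of derangements of $n$ elements (permutations of $\{1,\dots,n\}$ with no fixed points). Then the sequence $\{d_n\}_{n\ge 3}$ is asymptotically infinitely log-monotonic: for every integer $k\ge 0$ there exists $N\ge 3$ such that $\{d_n\}_{n\ge N}$ is log-monotonic of order $k$.
   Context: For a sequence $\{z_n\}$ of positive numbers, define the operator $R\{z_n\}=\{z_{n+1}/z_n\}$. A sequence of positive numbers $\{x_n\}$ is log-convex if $x_{n-1}x_{n+1}\ge x_n^2$ and log-concave if $x_{n-1}x_{n+1}\le x_n^2$, for all indices where these terms are defined. A sequence $\{z_n\}$ is log-monotonic of order $k$ if for every odd $r\le k-1$ the sequence $R^r\{z_n\}$ is log-concave and for every even $r\le k-1$ (including $r=0$) the sequence $R^r\{z_n\}$ is log-convex. *)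

theory Defs
  imports "HOL-Combinatorics.Permutations" Complex_Main
begin

definition derangements_count :: "nat \<Rightarrow> nat" where
  "derangements_count n = card {p. p permutes {1..n} \<and> (\<forall>x\<in>{1..n}. p x \<noteq> x)}"

definition ratio_op :: "(nat \<Rightarrow> real) \<Rightarrow> nat \<Rightarrow> real" where
  "ratio_op z = (\<lambda>n. z (Suc n) / z n)"

definition log_convex_from :: "nat \<Rightarrow> (nat \<Rightarrow> real) \<Rightarrow> bool" where
  "log_convex_from N z \<longleftrightarrow> (\<forall>n\<ge>N. z n > 0) \<and> (\<forall>n\<ge>N. z n * z (n + 2) \<ge> (z (n + 1))\<^sup>2)"

definition log_concave_from :: "nat \<Rightarrow> (nat \<Rightarrow> real) \<Rightarrow> bool" where
  "log_concave_from N z \<longleftrightarrow> (\<forall>n\<ge>N. z n > 0) \<and> (\<forall>n\<ge>N. z n * z (n + 2) \<le> (z (n + 1))\<^sup>2)"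

definition log_monotonic_from :: "nat \<Rightarrow> nat \<Rightarrow> (nat \<Rightarrow> real) \<Rightarrow> bool" where
  "log_monotonic_from k N z \<longleftrightarrow>
     (\<forall>r. r + 1 \<le> k \<longrightarrow>
        (odd r \<longrightarrow> log_concave_from N ((ratio_op ^^ r) z)) \<and>
        (even r \<longrightarrow> log_convex_from N ((ratio_op ^^ r) z)))"

end

theory Submission
  imports Defs
begin

text \<open>
  Put \<open>L n = ln d\<^sub>n\<close> and let \<open>\<Delta>\<close> be the forward difference. Since the logarithm turns
  the ratio operator into \<open>\<Delta>\<close>, log-monotonicity of order \<open>k\<close> follows from
  \<open>(-1)^r \<Delta>^(r+2) L n \<ge> 0\<close> for all \<open>r < k\<close>. The recurrence
  \<open>d\<^sub>n\<^sub>+\<^sub>1 = (n+1) d\<^sub>n + (-1)^(n+1)\<close> and the bound \<open>d\<^sub>n \<ge> (n-1)!\<close> show that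
  \<open>\<Delta>L n = ln (n+1) + w n\<close> with \<open>|w n| \<le> 2/(n-1)!\<close>. By the mean value theorem for iterated
  differences, \<open>(-1)^r \<Delta>^(r+1) ln (n+1) = r!/(\<xi>+1)^(r+1)\<close> for some \<open>\<xi> \<le> n+r+1\<close>, which
  is only polynomially small, while \<open>|\<Delta>^(r+1) w n| \<le> 2^(r+1) \<cdot> 2/(n-1)!\<close> is factorially
  small; so the sign pattern holds for all large \<open>n\<close>.
\<close>

definition derangements :: "'a set \<Rightarrow> ('a \<Rightarrow> 'a) set" where
  "derangements A = {p. p permutes A \<and> (\<forall>x\<in>A. p x \<noteq> x)}"

lemma finite_derangements: "finite A \<Longrightarrow> finite (derangements A)"
  unfolding derangements_def by (rule finite_subset[OF _ finite_permutations]) auto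

lemma card_derangements:
  assumes "finite A"
  shows "card (derangements A) = derangements_count (card A)"
proof -
  obtain f where "bij_betw f A {1..card A}"
    using finite_same_card_bij[OF assms, of "{1..card A}"] by auto
  from bij_betw_derangements[OF this] show ?thesis
    unfolding derangements_def derangements_count_def by (rule bij_betw_same_card)
qed

lemma derangements_Un_derangements_Diff:
  assumes "b \<in> A"
  shows "derangements A \<union> derangements (A - {b}) = {q. q permutes A \<and> (\<forall>x\<in>A - {b}. q x \<noteq> x)}"
proof (intro equalityI subsetI)
  fix q assume "q \<in> {q. q permutes A \<and> (\<forall>x\<in>A - {b}. q x \<noteq> x)}"
  then have q: "q permutes A" "\<forall>x\<in>A - {b}. q x \<noteq> x" by auto
  show "q \<in> derangements A \<union> derangements (A - {b})"
  proof (cases "q b = b")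
    case True
    then have "q permutes A - {b}"
      by (intro permutes_superset[OF q(1)]) auto
    with q(2) show ?thesis by (auto simp: derangements_def)
  next
    case False
    with q show ?thesis by (auto simp: derangements_def)
  qed
qed (auto simp: derangements_def dest: permutes_subset[of _ "A - {b}" A])

lemma derangements_insert_transpose_iff:
  assumes "a \<notin> A" "b \<in> A" "q = transpose a b \<circ> p"
  shows "p \<in> derangements (insert a A) \<and> p a = b \<longleftrightarrow> q permutes A \<and> (\<forall>x\<in>A - {b}. q x \<noteq> x)"
proof
  assume "p \<in> derangements (insert a A) \<and> p a = b"
  then have p: "p permutes insert a A" "\<forall>x\<in>insert a A. p x \<noteq> x" "p a = b"
    by (auto simp: derangements_def)
  have "q permutes insert a A"
    unfolding assms(3) using assms by (intro permutes_compose[OF p(1)] permutes_swap_id) auto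
  then have "q permutes A"
    by (rule permutes_superset) (use p(3) assms(3) in auto)
  moreover have "\<forall>x\<in>A - {b}. q x \<noteq> x"
    using p(2) assms by (auto simp: assms(3) transpose_def split: if_splits)
  ultimately show "q permutes A \<and> (\<forall>x\<in>A - {b}. q x \<noteq> x)" ..
next
  assume q: "q permutes A \<and> (\<forall>x\<in>A - {b}. q x \<noteq> x)"
  have p_eq: "p = transpose a b \<circ> q"
    by (simp add: assms(3) comp_assoc[symmetric])
  have "p permutes insert a A"
    unfolding p_eq using q assms(1,2)
    by (intro permutes_compose[OF permutes_subset[of _ A]] permutes_swap_id) auto
  moreover have "q a = a" "q x \<in> A" if "x \<in> A" for x
    using q assms(1,2) that by (auto simp: permutes_not_in permutes_in_image)
  ultimately show "p \<in> derangements (insert a A) \<and> p a = b"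
    using q assms(1,2) by (auto simp: p_eq derangements_def transpose_def split: if_splits)
qed

lemma derangements_insert_fixed_image:
  assumes "a \<notin> A" "b \<in> A"
  shows "{p \<in> derangements (insert a A). p a = b}
           = (\<lambda>q. transpose a b \<circ> q) ` {q. q permutes A \<and> (\<forall>x\<in>A - {b}. q x \<noteq> x)}"
proof -
  note slice_iff = derangements_insert_transpose_iff[OF assms]
  have swap_swap: "transpose a b \<circ> (transpose a b \<circ> q) = q" for q :: "'a \<Rightarrow> 'a"
    by (simp add: comp_assoc[symmetric])
  show ?thesis
  proof (intro equalityI subsetI)
    fix p assume "p \<in> {p \<in> derangements (insert a A). p a = b}"
    then show "p \<in> (\<lambda>q. transpose a b \<circ> q) ` {q. q permutes A \<and> (\<forall>x\<in>A - {b}. q x \<noteq> x)}"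
      using slice_iff[OF refl, of p] swap_swap[of p]
      by (intro image_eqI[where x = "transpose a b \<circ> p"]) auto
  next
    fix p assume "p \<in> (\<lambda>q. transpose a b \<circ> q) ` {q. q permutes A \<and> (\<forall>x\<in>A - {b}. q x \<noteq> x)}"
    then obtain q where "p = transpose a b \<circ> q" "q permutes A \<and> (\<forall>x\<in>A - {b}. q x \<noteq> x)"
      by blast
    then show "p \<in> {p \<in> derangements (insert a A). p a = b}"
      using slice_iff[of q p] swap_swap by auto
  qed
qed

lemma card_derangements_insert:
  assumes "finite A" "a \<notin> A"
  shows "card (derangements (insert a A))
           = (\<Sum>b\<in>A. card (derangements A) + card (derangements (A - {b})))"
proof -
  have "derangements (insert a A) = (\<Union>b\<in>A. {p \<in> derangements (insert a A). p a = b})"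
    by (auto simp: derangements_def dest: permutes_in_image[where x = a])
  then have "card (derangements (insert a A))
               = card (\<Union>b\<in>A. {p \<in> derangements (insert a A). p a = b})"
    by (rule arg_cong)
  also have "\<dots> = (\<Sum>b\<in>A. card {p \<in> derangements (insert a A). p a = b})"
    using assms(1) finite_derangements[of "insert a A"] by (intro card_UN_disjoint) auto
  also have "\<dots> = (\<Sum>b\<in>A. card (derangements A \<union> derangements (A - {b})))"
  proof (rule sum.cong[OF refl])
    fix b assume "b \<in> A"
    have inj: "inj (\<lambda>q. transpose a b \<circ> q)"
      by (rule inj_on_inverseI[where g = "\<lambda>q. transpose a b \<circ> q"]) (simp add: comp_assoc[symmetric])
    then show "card {p \<in> derangements (insert a A). p a = b}
                 = card (derangements A \<union> derangements (A - {b}))"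
      using \<open>b \<in> A\<close> assms(2)
      by (simp add: derangements_insert_fixed_image derangements_Un_derangements_Diff
                    card_image[OF inj_on_subset[OF inj subset_UNIV]])
  qed
  also have "\<dots> = (\<Sum>b\<in>A. card (derangements A) + card (derangements (A - {b})))"
  proof (rule sum.cong[OF refl])
    fix b assume "b \<in> A"
    then have "derangements A \<inter> derangements (A - {b}) = {}"
      by (auto simp: derangements_def permutes_not_in)
    with assms(1) show "card (derangements A \<union> derangements (A - {b}))
                          = card (derangements A) + card (derangements (A - {b}))"
      by (simp add: card_Un_disjoint finite_derangements)
  qed
  finally show ?thesis .
qed

lemma derangements_count_eq_card: "derangements_count n = card (derangements {1..n})"
  by (simp add: derangements_count_def derangements_def)

lemma derangements_count_0: "derangements_count 0 = 1"
  by (simp add: derangements_count_eq_card derangements_def)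

lemma derangements_count_1: "derangements_count 1 = 0"
  using card_derangements_insert[of "{}" "1::nat"] by (simp add: derangements_count_eq_card)

lemma derangements_count_Suc_Suc:
  "derangements_count (Suc (Suc n))
     = Suc n * (derangements_count (Suc n) + derangements_count n)"
proof -
  have "{1..Suc (Suc n)} = insert (Suc (Suc n)) {1..Suc n}"
    by auto
  then have "derangements_count (Suc (Suc n))
               = (\<Sum>b\<in>{1..Suc n}. card (derangements {1..Suc n}) + card (derangements ({1..Suc n} - {b})))"
    using card_derangements_insert[of "{1..Suc n}" "Suc (Suc n)"]
    by (simp add: derangements_count_eq_card)
  then show ?thesis
    by (simp add: card_derangements)
qed

lemma derangements_count_Suc:
  "real (derangements_count (Suc n)) = real (Suc n) * real (derangements_count n) + (-1) ^ Suc n"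
proof (induction n)
  case 0
  show ?case by (simp add: derangements_count_0 derangements_count_1[unfolded One_nat_def])
next
  case (Suc n)
  have "real (derangements_count (Suc (Suc n)))
          = real (Suc n) * real (derangements_count (Suc n)) + real (Suc n) * real (derangements_count n)"
    by (simp only: derangements_count_Suc_Suc of_nat_mult of_nat_add distrib_left)
  also have "\<dots> = real (Suc (Suc n)) * real (derangements_count (Suc n)) + (-1) ^ Suc (Suc n)"
    using Suc.IH by (simp add: algebra_simps)
  finally show ?case .
qed

lemma derangements_count_ge_fact:
  assumes "n \<ge> 2"
  shows "fact (n - 1) \<le> derangements_count n"
  using assms
proof (induction n rule: nat_induct_at_least)
  case base
  show ?case
    using derangements_count_Suc_Suc[of 0]
    by (simp add: numeral_2_eq_2 derangements_count_0 derangements_count_1[unfolded One_nat_def])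
next
  case (Suc n)
  then obtain m where n: "n = Suc m"
    by (cases n) auto
  have "fact n = n * fact (n - 1)"
    using n by simp
  also have "\<dots> \<le> n * derangements_count n"
    using Suc.IH by simp
  also have "\<dots> \<le> derangements_count (Suc n)"
    using derangements_count_Suc_Suc[of m] n by (simp add: distrib_left)
  finally show ?case
    by simp
qed

definition fdiff :: "('a::{plus,one} \<Rightarrow> 'b::minus) \<Rightarrow> 'a \<Rightarrow> 'b" where
  "fdiff f x = f (x + 1) - f x"

lemma funpow_fdiff_Suc_apply:
  "(fdiff ^^ Suc j) f x = (fdiff ^^ j) f (x + 1) - (fdiff ^^ j) f x"
  by (simp add: fdiff_def)

lemma funpow_fdiff_Suc: "(fdiff ^^ Suc j) f = (fdiff ^^ j) (fdiff f)"
  by (simp only: funpow_Suc_right comp_apply)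

lemma funpow_fdiff_of_nat:
  "(fdiff ^^ j) (\<lambda>n. f (of_nat n :: 'a::semiring_1)) n = (fdiff ^^ j) f (of_nat n)"
  by (induction j arbitrary: n) (simp_all add: fdiff_def add.commute)

lemma funpow_fdiff_add:
  fixes f g :: "'a::{plus,one} \<Rightarrow> 'b::ab_group_add"
  shows "(fdiff ^^ j) (\<lambda>x. f x + g x) x = (fdiff ^^ j) f x + (fdiff ^^ j) g x"
  by (induction j arbitrary: x) (simp_all add: fdiff_def)

lemma funpow_fdiff_cong:
  fixes f g :: "nat \<Rightarrow> 'b::minus"
  assumes "\<And>i. i \<ge> n \<Longrightarrow> f i = g i"
  shows "(fdiff ^^ j) f n = (fdiff ^^ j) g n"
  using assms by (induction j arbitrary: n) (simp_all add: fdiff_def)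

lemma abs_funpow_fdiff_le:
  fixes w :: "nat \<Rightarrow> real"
  assumes "\<And>i. i \<ge> n \<Longrightarrow> \<bar>w i\<bar> \<le> M"
  shows "\<bar>(fdiff ^^ j) w n\<bar> \<le> 2 ^ j * M"
  using assms
proof (induction j arbitrary: n)
  case (Suc j)
  have "\<bar>(fdiff ^^ j) w (Suc n)\<bar> \<le> 2 ^ j * M" "\<bar>(fdiff ^^ j) w n\<bar> \<le> 2 ^ j * M"
    using Suc by auto
  then show ?case
    unfolding funpow_fdiff_Suc_apply by simp
qed simp

lemma funpow_fdiff_mean_value:
  fixes F :: "nat \<Rightarrow> real \<Rightarrow> real"
  assumes deriv: "\<And>k y. y \<ge> a \<Longrightarrow> (F k has_real_derivative F (Suc k) y) (at y)"
    and "x \<ge> a"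
  shows "\<exists>\<xi>. x \<le> \<xi> \<and> \<xi> \<le> x + real j \<and> (fdiff ^^ j) (F 0) x = F j \<xi>"
  using deriv
proof (induction j arbitrary: F)
  case (Suc j)
  have "(fdiff (F k) has_real_derivative fdiff (F (Suc k)) y) (at y)" if "y \<ge> a" for k y
    unfolding fdiff_def using that
    by (intro DERIV_diff Suc.prems) (auto simp: DERIV_shift[where z = 1, symmetric] add.commute intro: Suc.prems)
  from Suc.IH[of "\<lambda>k. fdiff (F k)", OF this]
  obtain \<xi> where \<xi>: "x \<le> \<xi>" "\<xi> \<le> x + real j" "(fdiff ^^ j) (fdiff (F 0)) x = fdiff (F j) \<xi>"
    by auto
  obtain \<eta> where \<eta>: "\<xi> < \<eta>" "\<eta> < \<xi> + 1" "F j (\<xi> + 1) - F j \<xi> = (\<xi> + 1 - \<xi>) * F (Suc j) \<eta>"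
    using MVT2[of \<xi> "\<xi> + 1" "F j" "F (Suc j)"] Suc.prems \<xi> assms(2) by auto
  have "(fdiff ^^ Suc j) (F 0) x = F (Suc j) \<eta>"
    unfolding funpow_fdiff_Suc using \<xi>(3) \<eta>(3) by (simp add: fdiff_def)
  with \<xi> \<eta> show ?case
    by (intro exI[of _ \<eta>]) auto
qed (use assms(2) in auto)

fun ln_plus_one_deriv :: "nat \<Rightarrow> real \<Rightarrow> real" where
  "ln_plus_one_deriv 0 x = ln (x + 1)"
| "ln_plus_one_deriv (Suc k) x = (-1) ^ k * fact k / (x + 1) ^ Suc k"

lemma has_real_derivative_ln_plus_one_deriv:
  assumes "x > -1"
  shows "(ln_plus_one_deriv k has_real_derivative ln_plus_one_deriv (Suc k) x) (at x)"
proof (cases k)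
  case 0
  have "ln_plus_one_deriv 0 = (\<lambda>x. ln (x + 1))"
    by (simp add: fun_eq_iff)
  with assms show ?thesis
    unfolding 0 by (auto intro!: derivative_eq_intros)
next
  case (Suc i)
  let ?c = "(-1) ^ i * fact i :: real"
  have deriv: "((\<lambda>x. ?c / (x + 1) ^ Suc i) has_real_derivative - ?c * real (Suc i) / (x + 1) ^ Suc (Suc i)) (at x)"
    by (rule derivative_eq_intros refl | use assms in simp)+
  have fun_eq: "ln_plus_one_deriv (Suc i) = (\<lambda>x. ?c / (x + 1) ^ Suc i)"
    by (simp add: fun_eq_iff)
  have deriv_eq: "- ?c * real (Suc i) / (x + 1) ^ Suc (Suc i) = ln_plus_one_deriv (Suc (Suc i)) x"
    by (simp add: fact_Suc)
  show ?thesis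
    unfolding Suc by (simp only: fun_eq deriv_eq[symmetric] deriv)
qed

lemma alternating_funpow_fdiff_ln_ge:
  "(-1) ^ i * (fdiff ^^ Suc i) (\<lambda>n. ln (real n + 1)) n \<ge> fact i / (real n + 1 + real (Suc i)) ^ Suc i"
proof -
  obtain \<xi> where \<xi>: "real n \<le> \<xi>" "\<xi> \<le> real n + real (Suc i)"
    and "(fdiff ^^ Suc i) (ln_plus_one_deriv 0) (real n) = ln_plus_one_deriv (Suc i) \<xi>"
    using funpow_fdiff_mean_value[of 0 ln_plus_one_deriv "real n" "Suc i"]
      has_real_derivative_ln_plus_one_deriv by force
  then have "(-1) ^ i * (fdiff ^^ Suc i) (\<lambda>n. ln (real n + 1)) n = fact i / (\<xi> + 1) ^ Suc i"
    using funpow_fdiff_of_nat[of "Suc i" "ln_plus_one_deriv 0" n]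
    by (simp flip: power_add mult.assoc)
  also have "\<dots> \<ge> fact i / (real n + 1 + real (Suc i)) ^ Suc i"
    using \<xi> by (intro divide_left_mono power_mono mult_pos_pos) auto
  finally show ?thesis .
qed

lemma alternating_funpow_fdiff_ln_ge_inverse_power:
  assumes "r + 1 \<le> k"
  shows "1 / (real n + real k + 1) ^ k \<le> (-1) ^ r * (fdiff ^^ Suc r) (\<lambda>n. ln (real n + 1)) n"
proof -
  have Q: "1 \<le> real n + 1 + real (Suc r)" "real n + 1 + real (Suc r) \<le> real n + real k + 1"
    using assms by auto
  have "1 / (real n + real k + 1) ^ k \<le> 1 / (real n + 1 + real (Suc r)) ^ Suc r"
    using Q assms by (intro divide_left_mono order.trans[OF power_mono power_increasing]) auto
  also have "\<dots> \<le> fact r / (real n + 1 + real (Suc r)) ^ Suc r"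
    using Q(1) by (intro divide_right_mono) auto
  also have "\<dots> \<le> (-1) ^ r * (fdiff ^^ Suc r) (\<lambda>n. ln (real n + 1)) n"
    by (rule alternating_funpow_fdiff_ln_ge)
  finally show ?thesis .
qed

lemma funpow_ratio_op_pos_ln:
  assumes pos: "\<And>n. n \<ge> N \<Longrightarrow> z n > 0" and "n \<ge> N"
  shows "(ratio_op ^^ r) z n > 0 \<and> ln ((ratio_op ^^ r) z n) = (fdiff ^^ r) (\<lambda>n. ln (z n)) n"
  using \<open>n \<ge> N\<close>
proof (induction r arbitrary: n)
  case (Suc r)
  let ?R = "(ratio_op ^^ r) z" and ?D = "(fdiff ^^ r) (\<lambda>n. ln (z n))"
  have IH: "?R n > 0" "?R (Suc n) > 0" "ln (?R n) = ?D n" "ln (?R (Suc n)) = ?D (Suc n)"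
    using Suc by auto
  have "(ratio_op ^^ Suc r) z n = ?R (Suc n) / ?R n"
    by (simp only: funpow.simps comp_apply ratio_op_def)
  moreover have "(fdiff ^^ Suc r) (\<lambda>n. ln (z n)) n = ?D (Suc n) - ?D n"
    using funpow_fdiff_Suc_apply[of r _ n] by (simp only: Suc_eq_plus1)
  ultimately show ?case
    using IH by (simp only: ln_divide_pos) (blast intro: divide_pos_pos)
qed (use pos in simp)

lemma log_convex_fromI:
  assumes "\<And>n. n \<ge> N \<Longrightarrow> z n > 0" "\<And>n. n \<ge> N \<Longrightarrow> (fdiff ^^ 2) (\<lambda>n. ln (z n)) n \<ge> 0"
  shows "log_convex_from N z"
  unfolding log_convex_from_def
proof (intro conjI allI impI)
  fix n assume "n \<ge> N"
  then have pos_n: "z n > 0" "z (n + 1) > 0" "z (n + 2) > 0"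
    using assms(1) by simp_all
  have "2 * ln (z (n + 1)) \<le> ln (z n) + ln (z (n + 2))"
    using assms(2)[OF \<open>n \<ge> N\<close>] by (simp add: fdiff_def numeral_2_eq_2)
  then have "ln (z (n + 1) ^ 2) \<le> ln (z n * z (n + 2))"
    by (simp only: ln_mult_pos[OF pos_n(1,3)] ln_realpow)
  with pos_n show "z n * z (n + 2) \<ge> (z (n + 1))\<^sup>2"
    by simp
qed (use assms in simp)

lemma log_concave_fromI:
  assumes "\<And>n. n \<ge> N \<Longrightarrow> z n > 0" "\<And>n. n \<ge> N \<Longrightarrow> (fdiff ^^ 2) (\<lambda>n. ln (z n)) n \<le> 0"
  shows "log_concave_from N z"
  unfolding log_concave_from_def
proof (intro conjI allI impI)
  fix n assume "n \<ge> N"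
  then have pos_n: "z n > 0" "z (n + 1) > 0" "z (n + 2) > 0"
    using assms(1) by simp_all
  have "ln (z n) + ln (z (n + 2)) \<le> 2 * ln (z (n + 1))"
    using assms(2)[OF \<open>n \<ge> N\<close>] by (simp add: fdiff_def numeral_2_eq_2)
  then have "ln (z n * z (n + 2)) \<le> ln (z (n + 1) ^ 2)"
    by (simp only: ln_mult_pos[OF pos_n(1,3)] ln_realpow)
  with pos_n show "z n * z (n + 2) \<le> (z (n + 1))\<^sup>2"
    by simp
qed (use assms in simp)

lemma log_monotonic_fromI:
  assumes pos: "\<And>n. n \<ge> N \<Longrightarrow> z n > 0"
    and alt: "\<And>r n. r + 1 \<le> k \<Longrightarrow> n \<ge> N \<Longrightarrow> (-1) ^ r * (fdiff ^^ (r + 2)) (\<lambda>n. ln (z n)) n \<ge> 0"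
  shows "log_monotonic_from k N z"
  unfolding log_monotonic_from_def
proof (intro allI impI conjI)
  fix r assume r: "r + 1 \<le> k"
  have pos_r: "(ratio_op ^^ r) z n > 0" if "n \<ge> N" for n
    using funpow_ratio_op_pos_ln[of N z n r] pos that by blast
  have "(fdiff ^^ 2) (\<lambda>n. ln ((ratio_op ^^ r) z n)) n = (fdiff ^^ (r + 2)) (\<lambda>n. ln (z n)) n"
    if "n \<ge> N" for n
  proof -
    have "(fdiff ^^ 2) (\<lambda>n. ln ((ratio_op ^^ r) z n)) n = (fdiff ^^ 2) ((fdiff ^^ r) (\<lambda>n. ln (z n))) n"
      using funpow_ratio_op_pos_ln[of N z _ r] pos that by (intro funpow_fdiff_cong) auto
    then show ?thesis
      by (simp only: add.commute[of r 2] funpow_add comp_apply)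
  qed
  with alt[OF r] show "odd r \<Longrightarrow> log_concave_from N ((ratio_op ^^ r) z)"
    and "even r \<Longrightarrow> log_convex_from N ((ratio_op ^^ r) z)"
    by (auto intro!: log_concave_fromI log_convex_fromI pos_r)
qed

lemma eventually_poly_less_fact:
  fixes C c :: real
  assumes "c \<ge> 0"
  shows "eventually (\<lambda>m. C * (real m + c) ^ k < fact m) sequentially"
proof -
  define a where "a m = C * (real m + c) ^ k / fact m" for m
  have "norm (a (Suc m)) \<le> 1 / 2 * norm (a m)" if m: "m \<ge> 2 ^ (k + 1)" for m
  proof -
    have "real m \<ge> 1"
      using m one_le_power[of "2::nat" "k + 1"] by linarith
    then have "(real (Suc m) + c) ^ k \<le> (2 * (real m + c)) ^ k"
      using assms by (intro power_mono) auto
    also have "\<dots> = 2 ^ k * (real m + c) ^ k"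
      by (rule power_mult_distrib)
    finally have num: "\<bar>C\<bar> * (real (Suc m) + c) ^ k \<le> \<bar>C\<bar> * (2 ^ k * (real m + c) ^ k)"
      by (intro mult_left_mono) auto
    have "real (2 ^ (k + 1)) \<le> real (Suc m)"
      using m by linarith
    then have den: "2 ^ (k + 1) * fact m \<le> real (Suc m) * (fact m :: real)"
      by (intro mult_right_mono) simp_all
    have "norm (a (Suc m)) = \<bar>C\<bar> * (real (Suc m) + c) ^ k / (real (Suc m) * fact m)"
      using assms by (simp add: a_def abs_mult fact_Suc del: of_nat_Suc)
    also have "\<dots> \<le> \<bar>C\<bar> * (2 ^ k * (real m + c) ^ k) / (2 ^ (k + 1) * fact m)"
      using num den assms by (intro frac_le) auto
    also have "\<dots> = 1 / 2 * norm (a m)"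
      using assms by (simp add: a_def abs_mult)
    finally show ?thesis .
  qed
  then have "a \<longlonglongrightarrow> 0"
    by (intro summable_LIMSEQ_zero summable_ratio_test[of "1/2"]) auto
  then have "eventually (\<lambda>m. a m < 1) sequentially"
    by (rule order_tendstoD) simp
  then show ?thesis
    by eventually_elim (simp add: a_def)
qed

lemma eventually_alternating_funpow_fdiff:
  fixes L :: "nat \<Rightarrow> real"
  assumes near_ln: "\<And>n. n \<ge> n0 \<Longrightarrow> \<bar>fdiff L n - ln (real n + 1)\<bar> \<le> C / fact (n - 1)"
  shows "eventually (\<lambda>n. \<forall>r. r + 1 \<le> k \<longrightarrow> (-1) ^ r * (fdiff ^^ (r + 2)) L n > 0) sequentially"
proof -
  define w where "w n = fdiff L n - ln (real n + 1)" for n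
  have "0 \<le> C / fact (n0 - 1)"
    using near_ln[of n0] by (meson abs_ge_zero order.trans order_refl)
  then have "0 \<le> C / fact (n0 - 1) * fact (n0 - 1)"
    by (rule mult_nonneg_nonneg) simp
  then have "C \<ge> 0"
    by simp
  obtain M where M: "\<And>m. m \<ge> M \<Longrightarrow> 2 ^ k * C * (real m + real (k + 2)) ^ k < fact m"
    using eventually_poly_less_fact[of "real (k + 2)" "2 ^ k * C" k] by (auto simp: eventually_sequentially)
  have "(-1) ^ r * (fdiff ^^ (r + 2)) L n > 0" if r: "r + 1 \<le> k" and n: "n \<ge> max n0 (M + 1)" for r n
  proof -
    define A where "A = (fdiff ^^ Suc r) (\<lambda>n. ln (real n + 1)) n"
    define B where "B = (fdiff ^^ Suc r) w n"
    have "(fdiff ^^ (r + 2)) L n = (fdiff ^^ Suc r) (\<lambda>n. ln (real n + 1) + w n) n"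
      by (simp add: w_def funpow_fdiff_Suc del: funpow.simps)
    then have split: "(fdiff ^^ (r + 2)) L n = A + B"
      by (simp only: funpow_fdiff_add A_def B_def)
    have A_ge: "(-1) ^ r * A \<ge> 1 / (real n + real k + 1) ^ k"
      unfolding A_def using r by (rule alternating_funpow_fdiff_ln_ge_inverse_power)
    have "\<bar>B\<bar> \<le> 2 ^ Suc r * (C / fact (n - 1))"
      unfolding B_def w_def
    proof (rule abs_funpow_fdiff_le)
      fix i assume "i \<ge> n"
      then have "C / fact (i - 1) \<le> C / fact (n - 1)"
        using \<open>C \<ge> 0\<close> by (intro divide_left_mono fact_mono) auto
      with near_ln[of i] \<open>i \<ge> n\<close> n show "\<bar>fdiff L i - ln (real i + 1)\<bar> \<le> C / fact (n - 1)"
        by simp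
    qed
    also have "\<dots> \<le> 2 ^ k * (C / fact (n - 1))"
      using r \<open>C \<ge> 0\<close> by (intro mult_right_mono power_increasing) auto
    also have "\<dots> < 1 / (real n + real k + 1) ^ k"
      using M[of "n - 1"] n by (auto simp: field_simps of_nat_diff)
    finally have "\<bar>B\<bar> < (-1) ^ r * A"
      using A_ge by linarith
    moreover have "\<bar>(-1) ^ r * B\<bar> = \<bar>B\<bar>"
      by (simp add: abs_mult)
    ultimately show ?thesis
      unfolding split distrib_left using abs_ge_minus_self[of "(-1) ^ r * B"] by linarith
  qed
  then show ?thesis
    unfolding eventually_sequentially by blast
qed

lemma abs_ln_one_plus_le:
  fixes x :: real
  assumes "\<bar>x\<bar> \<le> 1 / 2"
  shows "\<bar>ln (1 + x)\<bar> \<le> 2 * \<bar>x\<bar>"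
proof -
  have "2 * x\<^sup>2 \<le> \<bar>x\<bar>"
    using assms mult_right_mono[of "2 * \<bar>x\<bar>" 1 "\<bar>x\<bar>"] by (simp add: power2_eq_square)
  with abs_ln_one_plus_x_minus_x_bound[OF assms] show ?thesis
    by linarith
qed

lemma abs_fdiff_ln_derangements_count_le:
  assumes "n \<ge> 2"
  shows "\<bar>fdiff (\<lambda>n. ln (real (derangements_count n))) n - ln (real n + 1)\<bar> \<le> 2 / fact (n - 1)"
proof -
  define D where "D = real (derangements_count n)"
  define t :: real where "t = (-1) ^ Suc n / ((real n + 1) * D)"
  have "fact (n - 1) \<le> D"
    unfolding D_def using derangements_count_ge_fact[OF assms] by (metis of_nat_fact of_nat_le_iff)
  moreover from this have "D \<ge> 1"
    using fact_ge_1[of "n - 1", where 'a = real] by linarith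
  ultimately have D: "fact (n - 1) \<le> D" "D \<ge> 1" .
  have abs_t: "\<bar>t\<bar> = 1 / ((real n + 1) * D)"
    using D by (simp add: t_def abs_mult)
  also have "\<dots> \<le> 1 / D"
    using D by (simp add: divide_simps)
  finally have t_le: "\<bar>t\<bar> \<le> 1 / D" .
  have "(real n + 1) * D \<ge> 2"
    using assms D(2) mult_mono[of 2 "real n + 1" 1 D] by simp
  then have "\<bar>t\<bar> \<le> 1 / 2"
    unfolding abs_t by (simp add: divide_simps)
  then have ln_t: "\<bar>ln (1 + t)\<bar> \<le> 2 * \<bar>t\<bar>" and "1 + t > 0"
    by (auto intro: abs_ln_one_plus_le)
  have "(real n + 1) * D * t = (-1) ^ Suc n"
    using D(2) by (simp add: t_def)
  then have "real (derangements_count (Suc n)) = (real n + 1) * D * (1 + t)"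
    using derangements_count_Suc[of n] by (simp add: D_def distrib_left)
  then have "fdiff (\<lambda>n. ln (real (derangements_count n))) n - ln (real n + 1) = ln (1 + t)"
    using D(2) \<open>1 + t > 0\<close> by (simp add: fdiff_def ln_mult_pos D_def)
  moreover have "1 / D \<le> 1 / fact (n - 1)"
    using D by (intro divide_left_mono) auto
  ultimately show ?thesis
    using ln_t t_le by simp
qed

theorem theorem3p1:
  shows "\<forall>k::nat. \<exists>N\<ge>3. log_monotonic_from k N (\<lambda>n. real (derangements_count n))"
proof
  fix k :: nat
  let ?L = "\<lambda>n. ln (real (derangements_count n))"
  have "eventually (\<lambda>n. \<forall>r. r + 1 \<le> k \<longrightarrow> (-1) ^ r * (fdiff ^^ (r + 2)) ?L n > 0) sequentially"
    using abs_fdiff_ln_derangements_count_le by (rule eventually_alternating_funpow_fdiff)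
  then obtain N where N: "N \<ge> 3" "\<And>r n. r + 1 \<le> k \<Longrightarrow> n \<ge> N \<Longrightarrow> (-1) ^ r * (fdiff ^^ (r + 2)) ?L n > 0"
    unfolding eventually_sequentially by (metis max.bounded_iff max.cobounded2)
  have "log_monotonic_from k N (\<lambda>n. real (derangements_count n))"
  proof (rule log_monotonic_fromI)
    fix n assume "n \<ge> N"
    with N(1) have "fact (n - 1) \<le> derangements_count n"
      by (intro derangements_count_ge_fact) simp
    then have "1 \<le> derangements_count n"
      by (rule order.trans[OF fact_ge_1])
    then show "real (derangements_count n) > 0"
      by simp
  qed (use N(2) in \<open>auto intro: less_imp_le\<close>)
  with N(1) show "\<exists>N\<ge>3. log_monotonic_from k N (\<lambda>n. real (derangements_count n))"
    by blast
qed

end
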